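(* Let ${\bf u}:D_1\to\mathbb{C}^2$ be the map of the General Construction with $r_n=2^{-n+1}$ (so $r_1=1$), $p(n)=n$, and $F(n)=2^{n^2/2}$. Then ${\bf u}$ is smooth on $D_1$, vanishes to infinite order at the origin ($\|z^{-k}{\bf u}(z)\|\to 0$ as $z\to 0$ for every $k\ge 0$), ${\bf u}_z(z)\ne 0$ for $z\ne 0$, and there is a constant $C_1>0$ such that $$\frac{\|{\bf u}_{\bar z}(z)\|}{\|{\bf u}_z(z)\|}\le \frac{C_1}{-\log_2|z|}\quad\text{for all } z\in D_1\setminus\{0\}.$$
   Context: General Construction. Fix a smooth function $s:\mathbb{R}\to\mathbb{R}$ with $s\equiv 0$ on $[0,\tfrac14]$, $s$ increasing on $[\tfrac14,\tfrac34]$, $s(\tfrac12)=\tfrac12$, $s'(\tfrac12)=2$, $s''(\tfrac12)=0$, and $s\equiv 1$ on $[\tfrac34,1]$. Let $(r_n)_{n\ge 1}$ be a strictly decreasing sequence of positive reals with limit $0$, put $\Delta r_n=r_n-r_{n+1}$, let $D_{r_1}=\{|z|<r_1\}$, and let $A_n=\{z\in\mathbb{C}: r_{n+1}\le |z|\le r_n\}$. Define $\chi_n(z)=s\!\left(\frac{|z|-r_{n+1}}{\Delta r_n}\right)$ on $A_n$. Let $p(n)$ ($n\ge 0$) be an increasing sequence of nonnegative integers and $F(n)$ ($n\ge 0$) positive reals. Define ${\bf u}=(u^1,u^2):D_{r_1}\to\mathbb{C}^2$ by ${\bf u}(0)=(0,0)$ and, on $A_n$ with $n$ even, $u^1(z)=F(n)z^{p(n)}$,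 $u^2(z)=\chi_n(z)F(n-1)z^{p(n-1)}+(1-\chi_n(z))F(n+1)z^{p(n+1)}$; on $A_n$ with $n$ odd, the same formulas with the roles of $u^1$ and $u^2$ interchanged. ${\bf u}_z=(u^1_z,u^2_z)$, ${\bf u}_{\bar z}=(u^1_{\bar z},u^2_{\bar z})$ with $\partial_z=\frac12(\partial_x-i\partial_y)$, $\partial_{\bar z}=\frac12(\partial_x+i\partial_y)$; $\|\cdot\|$ is the Euclidean norm on $\mathbb{C}^2$. *)

theory Defs
  imports "HOL-Analysis.Analysis"
begin

fun Ck_on :: "nat \<Rightarrow> 'a::real_normed_vector set \<Rightarrow> ('a \<Rightarrow> 'b::real_normed_vector) \<Rightarrow> bool" where
  "Ck_on 0 S f = continuous_on S f"
| "Ck_on (Suc k) S f =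
     (\<exists>f'. (\<forall>x\<in>S. (f has_derivative f' x) (at x)) \<and> (\<forall>v. Ck_on k S (\<lambda>x. f' x v)))"

definition smooth_on :: "'a::real_normed_vector set \<Rightarrow> ('a \<Rightarrow> 'b::real_normed_vector) \<Rightarrow> bool" where
  "smooth_on S f \<longleftrightarrow> (\<forall>k. Ck_on k S f)"

text \<open>Wirtinger derivatives, d/dz = (d/dx - i d/dy)/2, d/dzbar = (d/dx + i d/dy)/2,
  of a function C -> C (C viewed as R^2), via the real Frechet derivative.\<close>
definition dz :: "(complex \<Rightarrow> complex) \<Rightarrow> complex \<Rightarrow> complex" where
  "dz f z = (frechet_derivative f (at z) 1 - \<i> * frechet_derivative f (at z) \<i>) / 2"

definition dzbar :: "(complex \<Rightarrow> complex) \<Rightarrow> complex \<Rightarrow> complex" where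
  "dzbar f z = (frechet_derivative f (at z) 1 + \<i> * frechet_derivative f (at z) \<i>) / 2"

text \<open>Componentwise for maps C -> C^2 (C^2 = complex \<times> complex, whose norm is Euclidean).\<close>
definition uz :: "(complex \<Rightarrow> complex \<times> complex) \<Rightarrow> complex \<Rightarrow> complex \<times> complex" where
  "uz u z = (dz (\<lambda>w. fst (u w)) z, dz (\<lambda>w. snd (u w)) z)"

definition uzbar :: "(complex \<Rightarrow> complex \<times> complex) \<Rightarrow> complex \<Rightarrow> complex \<times> complex" where
  "uzbar u z = (dzbar (\<lambda>w. fst (u w)) z, dzbar (\<lambda>w. snd (u w)) z)"

text \<open>Index n of the annulus A_n = {r_(n+1) \<le> |z| \<le> r_n} containing z (n \<ge> 1);
  on the common circle |z| = r_n the two defining formulas agree, so we pick the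
  half-open annulus r_(n+1) \<le> |z| < r_n.\<close>
definition annulus_idx :: "(nat \<Rightarrow> real) \<Rightarrow> complex \<Rightarrow> nat" where
  "annulus_idx r z = (LEAST n. 1 \<le> n \<and> r (Suc n) \<le> cmod z)"

definition gc_u :: "(real \<Rightarrow> real) \<Rightarrow> (nat \<Rightarrow> real) \<Rightarrow> (nat \<Rightarrow> nat) \<Rightarrow> (nat \<Rightarrow> real)
                    \<Rightarrow> complex \<Rightarrow> complex \<times> complex" where
  "gc_u s r p F z =
     (if z = 0 then (0, 0) else
      (let n = annulus_idx r z;
           chi = s ((cmod z - r (Suc n)) / (r n - r (Suc n)));
           a = complex_of_real (F n) * z ^ p n;
           b = complex_of_real chi * complex_of_real (F (n - 1)) * z ^ p (n - 1)
               + complex_of_real (1 - chi) * complex_of_real (F (Suc n)) * z ^ p (Suc n)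
       in if even n then (a, b) else (b, a)))"

end

theory Submission
  imports Defs "HOL-Real_Asymp.Real_Asymp"
begin

(* With r_n = 2^(1-n), p(n) = n and F(n) = 2^(n^2/2), the cutoffs of the
   General Construction are dyadic rescalings of one bump: on the annulus A_n one has
   chi_n(z) = s(2^n |z| - 1).  Put sigma(x) = s(x - 1) on [1,2], 0 left of it and 1 right
   of it, and kappa(x) = sigma(2x) - sigma(x/2), a smooth bump supported in [1/2,4].  Then
   each component of u is a "dyadic sum"
        U(z) = sum_m  F(m) * kappa(2^m |z|) * z^m      (m even resp. m odd),
   which near any z <> 0 has only finitely many nonzero levels.  An invariant on families of such terms ("admissible")
   bounds coefficients by F(m) times a power of 2^m; since F(m) = 2^(m^2/2) is beaten by
   |z|^m <= 2^(-m^2 + 2m) on the support of level m, every admissible dyadic sum vanishes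
   to infinite order at 0.  Hence all its derivatives exist at 0 and vanish, which gives
   smoothness by induction.  Finally u is identified with a pair of dyadic sums, its
   Wirtinger derivatives are computed on the three levels that meet A_n, and the ratio
   |u_zbar| / |u_z| is bounded by a constant divided by n, where n >= -log2 |z|. *)

lemma Ck_on_Suc_real:
  fixes f :: "real \<Rightarrow> real"
  assumes "Ck_on (Suc k) UNIV f"
  shows "(\<forall>x. (f has_real_derivative deriv f x) (at x)) \<and> Ck_on k UNIV (deriv f)"
proof -
  from assms obtain f' where d: "\<And>x. (f has_derivative f' x) (at x)"
    and c: "\<And>v. Ck_on k UNIV (\<lambda>x. f' x v)"
    by auto
  have lin: "f' x v = f' x 1 * v" for x v
  proof -
    have "linear (f' x)" using d has_derivative_linear by blast
    then have "f' x (v *\<^sub>R 1) = v *\<^sub>R f' x 1" using linear_scale by blast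
    then show ?thesis by simp
  qed
  have D: "(f has_real_derivative f' x 1) (at x)" for x
    by (rule has_derivative_imp_has_field_derivative[OF d]) (metis lin mult.commute)
  then have "deriv f x = f' x 1" for x by (rule DERIV_imp_deriv)
  then have "deriv f = (\<lambda>x. f' x 1)" by auto
  with c D show ?thesis by auto
qed

lemma smooth_on_real_deriv:
  fixes f :: "real \<Rightarrow> real"
  assumes "smooth_on UNIV f"
  shows "(\<forall>x. (f has_real_derivative deriv f x) (at x)) \<and> smooth_on UNIV (deriv f)"
  using assms Ck_on_Suc_real unfolding smooth_on_def by blast

definition iter_deriv :: "(real \<Rightarrow> real) \<Rightarrow> nat \<Rightarrow> real \<Rightarrow> real" where
  "iter_deriv s j = (deriv ^^ j) s"

lemma iter_deriv_smooth:
  assumes "smooth_on UNIV s"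
  shows "smooth_on UNIV (iter_deriv s j)
    \<and> (\<forall>x. (iter_deriv s j has_real_derivative iter_deriv s (Suc j) x) (at x))"
proof (induction j)
  case 0
  then show ?case using smooth_on_real_deriv[OF assms] by (simp add: iter_deriv_def assms)
next
  case (Suc j)
  then have "smooth_on UNIV (iter_deriv s (Suc j))"
    using smooth_on_real_deriv by (simp add: iter_deriv_def)
  then show ?case using smooth_on_real_deriv[of "iter_deriv s (Suc j)"] by (simp add: iter_deriv_def)
qed

lemma deriv_locally_constant:
  fixes f :: "real \<Rightarrow> real"
  assumes "(f has_real_derivative D) (at x)" "open S" "x \<in> S" "\<And>y. y \<in> S \<Longrightarrow> f y = c"
  shows "D = 0"
proof -
  have "((\<lambda>y. c) has_real_derivative 0) (at x)" by simp
  then have "(f has_real_derivative 0) (at x)"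
    by (rule has_field_derivative_transform_within_open[OF _ assms(2,3)]) (simp add: assms(4))
  then show ?thesis using assms(1) DERIV_unique by blast
qed

lemma iter_deriv_const_on_open:
  assumes "smooth_on UNIV s" "open S" "\<And>x. x \<in> S \<Longrightarrow> s x = c"
  shows "\<forall>x\<in>S. iter_deriv s j x = (if j = 0 then c else 0)"
proof (induction j)
  case 0 then show ?case using assms(3) by (simp add: iter_deriv_def)
next
  case (Suc j)
  show ?case
  proof
    fix x assume x: "x \<in> S"
    show "iter_deriv s (Suc j) x = (if Suc j = 0 then c else 0)"
      using deriv_locally_constant[of "iter_deriv s j" "iter_deriv s (Suc j) x" x S]
        iter_deriv_smooth[OF assms(1)] x Suc assms(2) by auto
  qed
qed

text \<open>The ramp \<open>\<sigma>\<close>: \<open>x \<mapsto> s (x - 1)\<close> on \<open>(1,2)\<close>, \<open>0\<close> left of it and \<open>1\<close> right of it,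
  together with its derivatives (\<open>ramp s j\<close> is the \<open>j\<close>-th one), and the dyadic bump
  \<open>\<kappa>(x) = \<sigma>(2x) - \<sigma>(x/2)\<close> with its derivatives.\<close>

definition ramp :: "(real \<Rightarrow> real) \<Rightarrow> nat \<Rightarrow> real \<Rightarrow> real" where
  "ramp s j x = (if x \<le> 1 then 0 else if 2 \<le> x then (if j = 0 then 1 else 0) else iter_deriv s j (x - 1))"

definition bump :: "(real \<Rightarrow> real) \<Rightarrow> nat \<Rightarrow> real \<Rightarrow> real" where
  "bump s j x = 2^j * ramp s j (2*x) - (1/2)^j * ramp s j (x/2)"

locale cutoff =
  fixes s :: "real \<Rightarrow> real"
  assumes s_smooth: "smooth_on UNIV s"
    and s_zero: "\<forall>x\<in>{0..1/4}. s x = 0"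
    and s_one: "\<forall>x\<in>{3/4..1}. s x = 1"
begin

lemma ramp_low: "x < 5/4 \<Longrightarrow> ramp s j x = 0"
  using iter_deriv_const_on_open[OF s_smooth, of "{0<..<1/4}" 0 j] s_zero
  by (auto simp: ramp_def)

lemma ramp_high: "x > 7/4 \<Longrightarrow> ramp s j x = (if j = 0 then 1 else 0)"
  using iter_deriv_const_on_open[OF s_smooth, of "{3/4<..<1}" 1 j] s_one
  by (auto simp: ramp_def)

lemma ramp_deriv: "(ramp s j has_real_derivative ramp s (Suc j) x) (at x)"
proof -
  consider "x < 5/4" | "1 < x \<and> x < 2" | "x > 7/4" by linarith
  then show ?thesis
  proof cases
    case 1
    have "((\<lambda>y. 0) has_real_derivative 0) (at x)" by simp
    then have "(ramp s j has_real_derivative 0) (at x)"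
      by (rule has_field_derivative_transform_within_open[of _ _ _ "{..<5/4}"])
         (use 1 ramp_low in auto)
    then show ?thesis using ramp_low 1 by simp
  next
    case 2
    have h: "((\<lambda>y. y - 1) has_real_derivative 1) (at x)" by (auto intro!: derivative_eq_intros)
    have "(iter_deriv s j has_real_derivative iter_deriv s (Suc j) (x - 1)) (at (x - 1))"
      using iter_deriv_smooth[OF s_smooth, of j] by blast
    from DERIV_chain2[OF this h]
    have "((\<lambda>y. iter_deriv s j (y - 1)) has_real_derivative iter_deriv s (Suc j) (x - 1)) (at x)"
      by simp
    then have "(ramp s j has_real_derivative iter_deriv s (Suc j) (x - 1)) (at x)"
      by (rule has_field_derivative_transform_within_open[of _ _ _ "{1<..<2}"])
         (use 2 in \<open>auto simp: ramp_def\<close>)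
    then show ?thesis using 2 by (simp add: ramp_def)
  next
    case 3
    have "((\<lambda>y. if j = 0 then 1 else 0) has_real_derivative 0) (at x)" by simp
    then have "(ramp s j has_real_derivative 0) (at x)"
      by (rule has_field_derivative_transform_within_open[of _ _ _ "{7/4<..}"])
         (use 3 ramp_high in auto)
    then show ?thesis using ramp_high 3 by simp
  qed
qed

lemma bump_deriv: "(bump s j has_real_derivative bump s (Suc j) x) (at x)"
proof -
  have h1: "((\<lambda>x. 2*x) has_real_derivative 2) (at x)" by (auto intro!: derivative_eq_intros)
  have h2: "((\<lambda>x. x/2) has_real_derivative 1/2) (at x)" by (auto intro!: derivative_eq_intros)
  have a: "((\<lambda>x. ramp s j (2*x)) has_real_derivative ramp s (Suc j) (2 * x) * 2) (at x)"
    using DERIV_chain2[OF ramp_deriv[of j "2*x"] h1] by simp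
  have b: "((\<lambda>x. ramp s j (x/2)) has_real_derivative ramp s (Suc j) (x/2) * (1/2)) (at x)"
    using DERIV_chain2[OF ramp_deriv[of j "x/2"] h2] by simp
  have "((\<lambda>x. 2^j * ramp s j (2*x) - (1/2)^j * ramp s j (x/2)) has_real_derivative
        2^j * (ramp s (Suc j) (2*x) * 2) - (1/2)^j * (ramp s (Suc j) (x/2) * (1/2))) (at x)"
    by (intro DERIV_diff DERIV_cmult a b)
  then show ?thesis unfolding bump_def[abs_def] by (simp add: algebra_simps)
qed

lemma bump_support: "x \<le> 1/2 \<or> 4 \<le> x \<Longrightarrow> bump s j x = 0"
  by (auto simp: bump_def ramp_def)

lemma bump_bounded: "\<exists>B\<ge>0. \<forall>x. \<bar>bump s j x\<bar> \<le> B"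
proof -
  have "continuous_on {1/2..4} (bump s j)"
    by (meson DERIV_isCont continuous_at_imp_continuous_on bump_deriv)
  then obtain B where B: "B \<ge> 0" "\<And>x. x \<in> {1/2..4} \<Longrightarrow> norm (bump s j x) \<le> B"
    using continuous_on_compact_bound[of "{1/2..4::real}" "bump s j"] by auto
  have "\<bar>bump s j x\<bar> \<le> B" for x
    using B bump_support[of x j] by (cases "x \<in> {1/2..4}") auto
  then show ?thesis using B(1) by blast
qed

lemma bump_bounded_upto: "\<exists>B\<ge>0. \<forall>j\<le>k. \<forall>x. \<bar>bump s j x\<bar> \<le> B"
proof (induction k)
  case 0 then show ?case using bump_bounded[of 0] by auto
next
  case (Suc k)
  obtain B where B: "B \<ge> 0" "\<forall>j\<le>k. \<forall>x. \<bar>bump s j x\<bar> \<le> B" using Suc by auto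
  obtain B' where B': "B' \<ge> 0" "\<forall>x. \<bar>bump s (Suc k) x\<bar> \<le> B'" using bump_bounded by blast
  have "\<forall>j\<le>Suc k. \<forall>x. \<bar>bump s j x\<bar> \<le> max B B'"
    using B B' by (metis le_Suc_eq max.coboundedI1 max.coboundedI2)
  then show ?case using B by (intro exI[of _ "max B B'"]) auto
qed

lemma bump_values:
  assumes "1 \<le> y" "y < 2"
  shows "bump s 0 (y/2) = s (y - 1)" "bump s 0 y = 1" "bump s 0 (2*y) = 1 - s (y - 1)"
    "bump s 1 y = 0"
  using assms s_zero by (auto simp: bump_def ramp_def iter_deriv_def)

end

text \<open>A bump term \<open>(c, j, a, b, e)\<close> at dyadic level \<open>m\<close> stands for the function
  \<open>c * \<kappa>_j(2^m |z|) * z^a * (conj z)^b / |z|^e\<close>, where \<open>\<kappa>_j\<close> is the \<open>j\<close>-th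
  derivative of the bump; it is supported in the annulus \<open>1/2 < 2^m |z| < 4\<close>.\<close>

type_synonym bterm = "complex \<times> nat \<times> nat \<times> nat \<times> nat"

fun eval_bterm :: "(real \<Rightarrow> real) \<Rightarrow> nat \<Rightarrow> bterm \<Rightarrow> complex \<Rightarrow> complex" where
  "eval_bterm s m (c, j, a, b, e) z =
     c * complex_of_real (bump s j (2^m * cmod z)) * z^a * cnj z ^ b / complex_of_real (cmod z ^ e)"

text \<open>The real derivative of a bump term in direction \<open>v\<close> is a sum of six bump terms
  (product rule; \<open>D|z| v = Re (v conj z) / |z|\<close>): \<open>diff_bterm\<close> lists them.\<close>

fun diff_bterm :: "complex \<Rightarrow> nat \<Rightarrow> bterm \<Rightarrow> bterm list" where
  "diff_bterm v m (c, j, a, b, e) =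
    [(c * v * 2^m / 2, Suc j, a, Suc b, Suc e),
     (c * cnj v * 2^m / 2, Suc j, Suc a, b, Suc e),
     (c * of_nat a * v, j, a - 1, b, e),
     (c * of_nat b * cnj v, j, a, b - 1, e),
     (- c * of_nat e * v / 2, j, a, Suc b, e + 2),
     (- c * of_nat e * cnj v / 2, j, Suc a, b, e + 2)]"

text \<open>The derivative of \<open>|z|\<close> in direction \<open>v\<close>, written with \<open>v\<close> and \<open>conj v\<close>.\<close>

lemma inner_sgn_complex:
  assumes "z \<noteq> 0"
  shows "complex_of_real (inner v (sgn z)) = (v * cnj z + cnj v * z) / (2 * complex_of_real (cmod z))"
  using assms
  by (simp add: complex_eq_iff sgn_div_norm inner_complex_def field_simps)

context cutoff begin

lemma bump_radial_deriv:
  assumes "z \<noteq> 0"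
  shows "((\<lambda>w. bump s j (2^m * cmod w)) has_derivative
           (\<lambda>v. bump s (Suc j) (2^m * cmod z) * (2^m * inner v (sgn z)))) (at z)"
proof -
  have N: "((\<lambda>w. 2^m * cmod w) has_derivative (\<lambda>v. 2^m * inner v (sgn z))) (at z)"
    using has_derivative_norm[OF assms] by (intro derivative_intros) auto
  show ?thesis
    using has_derivative_compose[OF N has_field_derivative_imp_has_derivative[OF bump_deriv]] .
qed

lemma eval_bterm_deriv:
  assumes z: "z \<noteq> 0"
  shows "(eval_bterm s m t has_derivative
           (\<lambda>v. sum_list (map (\<lambda>t'. eval_bterm s m t' z) (diff_bterm v m t)))) (at z)"
proof -
  obtain c j a b e where t: "t = (c, j, a, b, e)" by (cases t) auto
  have K: "((\<lambda>w. complex_of_real (bump s j (2^m * cmod w))) has_derivative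
           (\<lambda>v. complex_of_real (bump s (Suc j) (2^m * cmod z) * (2^m * inner v (sgn z))))) (at z)"
    using bump_radial_deriv[OF z] by (rule has_derivative_of_real)
  have R: "((\<lambda>w. complex_of_real (cmod w ^ e)) has_derivative
           (\<lambda>v. complex_of_real (of_nat e * inner v (sgn z) * cmod z ^ (e - 1)))) (at z)"
    using has_derivative_norm[OF z] by (intro derivative_intros) auto
  have P: "((\<lambda>w. w ^ a) has_derivative (\<lambda>v. of_nat a * v * z ^ (a - 1))) (at z)"
    by (auto intro!: derivative_eq_intros)
  have Q: "((\<lambda>w. cnj w ^ b) has_derivative (\<lambda>v. of_nat b * cnj v * cnj z ^ (b - 1))) (at z)"
    by (auto intro!: derivative_eq_intros)
  have R0: "complex_of_real (cmod z ^ e) \<noteq> 0" using z by simp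
  have ev: "eval_bterm s m (c, j, a, b, e) = (\<lambda>w. c * complex_of_real (bump s j (2^m * cmod w))
              * w^a * cnj w ^ b / complex_of_real (cmod w ^ e))"
    by (rule ext) simp
  have nz: "complex_of_real (cmod z) \<noteq> 0" using z by simp
  note I = inner_sgn_complex[OF z]
  show ?thesis unfolding t ev
    by (rule has_derivative_eq_rhs[OF has_derivative_divide[OF
          has_derivative_mult[OF has_derivative_mult[OF has_derivative_mult[OF
            has_derivative_const K] P] Q] R R0]])
       (rule ext, insert nz, cases e, simp_all add: I field_simps)
qed

end

text \<open>A dyadic sum is given by a list of bump terms \<open>Lf m\<close> for every level \<open>m\<close>; at
  \<open>z \<noteq> 0\<close> only the levels below \<open>top_level z\<close> can contribute, and it is \<open>0\<close> at \<open>0\<close>.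
  \<open>diff_family v Lf\<close> is the family obtained by differentiating in direction \<open>v\<close>.\<close>

definition top_level :: "complex \<Rightarrow> nat" where "top_level z = nat \<lceil>log 2 (4 / cmod z)\<rceil>"

definition level_sum :: "(real \<Rightarrow> real) \<Rightarrow> nat \<Rightarrow> bterm list \<Rightarrow> complex \<Rightarrow> complex" where
  "level_sum s m L z = sum_list (map (\<lambda>t. eval_bterm s m t z) L)"

definition dyadic_sum :: "(real \<Rightarrow> real) \<Rightarrow> (nat \<Rightarrow> bterm list) \<Rightarrow> complex \<Rightarrow> complex" where
  "dyadic_sum s Lf z = (if z = 0 then 0 else (\<Sum>m<top_level z. level_sum s m (Lf m) z))"

definition diff_family :: "complex \<Rightarrow> (nat \<Rightarrow> bterm list) \<Rightarrow> nat \<Rightarrow> bterm list" where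
  "diff_family v Lf m = concat (map (diff_bterm v m) (Lf m))"

lemma le_pow2_of_log:
  assumes "y > 0" "log 2 y \<le> real m"
  shows "y \<le> 2^m"
proof -
  have "y = 2 powr (log 2 y)" using assms by simp
  also have "\<dots> \<le> 2 powr (real m)" using assms by (intro powr_mono) auto
  finally show ?thesis by (simp add: powr_realpow)
qed

lemma top_level_large:
  assumes "z \<noteq> 0" "top_level z \<le> m"
  shows "4 \<le> 2^m * cmod z"
proof -
  have "log 2 (4 / cmod z) \<le> real m" using assms unfolding top_level_def by linarith
  then have "4 / cmod z \<le> 2^m" using assms by (intro le_pow2_of_log) auto
  then show ?thesis using assms by (simp add: field_simps)
qed

lemma sum_lessThan_extend:
  fixes M K :: nat
  assumes "\<And>m. M \<le> m \<Longrightarrow> f m = 0" "M \<le> K"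
  shows "sum f {..<K} = sum f {..<M}"
proof (rule sum.mono_neutral_right)
  show "finite {..<K}" by simp
  show "{..<M} \<subseteq> {..<K}" using assms(2) by auto
  show "\<forall>i\<in>{..<K} - {..<M}. f i = 0" using assms(1) by auto
qed

context cutoff begin

lemma eval_bterm_above: "4 \<le> 2^m * cmod z \<Longrightarrow> eval_bterm s m t z = 0"
  by (cases t) (simp add: bump_support)

lemma eval_bterm_below: "2^m * cmod z \<le> 1/2 \<Longrightarrow> eval_bterm s m t z = 0"
  by (cases t) (simp add: bump_support)

lemma level_sum_above: "4 \<le> 2^m * cmod z \<Longrightarrow> level_sum s m L z = 0"
  by (simp add: level_sum_def eval_bterm_above)

lemma dyadic_sum_truncate:
  assumes "z \<noteq> 0" "\<And>m. M \<le> m \<Longrightarrow> 4 \<le> 2^m * cmod z"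
  shows "dyadic_sum s Lf z = (\<Sum>m<M. level_sum s m (Lf m) z)"
proof -
  let ?f = "\<lambda>m. level_sum s m (Lf m) z"
  have "(\<Sum>m<max M (top_level z). ?f m) = (\<Sum>m<M. ?f m)"
    by (rule sum_lessThan_extend) (auto intro: level_sum_above assms)
  moreover have "(\<Sum>m<max M (top_level z). ?f m) = (\<Sum>m<top_level z. ?f m)"
    by (rule sum_lessThan_extend) (auto intro: level_sum_above top_level_large[OF assms(1)])
  ultimately show ?thesis using assms by (simp add: dyadic_sum_def)
qed

text \<open>Termwise differentiation of a dyadic sum away from \<open>0\<close>: near \<open>z\<close> the sum is a fixed
  finite sum of bump terms.\<close>

lemma level_sum_deriv:
  assumes "z \<noteq> 0"
  shows "(level_sum s m L has_derivative
           (\<lambda>v. level_sum s m (concat (map (diff_bterm v m) L)) z)) (at z)"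
proof (induction L)
  case Nil
  then show ?case by (simp add: level_sum_def[abs_def])
next
  case (Cons t L)
  have e: "level_sum s m (t # L) = (\<lambda>w. eval_bterm s m t w + level_sum s m L w)"
    by (simp add: level_sum_def[abs_def])
  show ?case unfolding e
    by (rule has_derivative_eq_rhs[OF has_derivative_add[OF eval_bterm_deriv[OF assms] Cons]])
       (simp add: level_sum_def)
qed

lemma dyadic_sum_deriv:
  assumes z: "z \<noteq> 0"
  shows "(dyadic_sum s Lf has_derivative (\<lambda>v. dyadic_sum s (diff_family v Lf) z)) (at z)"
proof -
  define M0 where "M0 = nat \<lceil>log 2 (8 / cmod z)\<rceil>"
  have big: "4 \<le> 2^m * cmod w" if "w \<in> ball z (cmod z / 2)" "M0 \<le> m" for w m
  proof -
    have "log 2 (8 / cmod z) \<le> real m" using that unfolding M0_def by linarith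
    then have "8 / cmod z \<le> 2^m" using z by (intro le_pow2_of_log) auto
    then have "8 \<le> 2^m * cmod z" using z by (simp add: field_simps)
    moreover have "cmod z \<le> 2 * cmod w"
      using that(1) norm_triangle_ineq2[of z w] by (simp add: dist_norm norm_minus_commute)
    ultimately have "8 \<le> 2^m * (2 * cmod w)"
      by (smt (verit, best) mult_left_mono zero_le_power)
    then show ?thesis by (simp add: mult.commute)
  qed
  have wnz: "w \<noteq> 0" if "w \<in> ball z (cmod z / 2)" for w
    using that z by (auto simp: dist_norm)
  have D: "((\<lambda>w. \<Sum>m<M0. level_sum s m (Lf m) w) has_derivative
            (\<lambda>v. \<Sum>m<M0. level_sum s m (concat (map (diff_bterm v m) (Lf m))) z)) (at z)"
    by (intro has_derivative_sum level_sum_deriv z)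
  have D2: "(dyadic_sum s Lf has_derivative
            (\<lambda>v. \<Sum>m<M0. level_sum s m (concat (map (diff_bterm v m) (Lf m))) z)) (at z)"
    by (rule has_derivative_transform_within_open[OF D, of "ball z (cmod z / 2)"])
       (use z in \<open>auto simp: dyadic_sum_truncate[OF wnz big]\<close>)
  have "(\<Sum>m<M0. level_sum s m (concat (map (diff_bterm v m) (Lf m))) z)
          = dyadic_sum s (diff_family v Lf) z" for v
  proof -
    have "\<And>m. M0 \<le> m \<Longrightarrow> 4 \<le> 2^m * cmod z" using big[of z] z by auto
    from dyadic_sum_truncate[OF z this, where Lf = "diff_family v Lf"]
    show ?thesis by (simp add: diff_family_def)
  qed
  then show ?thesis using D2 by simp
qed

end

text \<open>Growth of the coefficients: \<open>F(m) = 2^(m^2/2)\<close>, and the factor \<open>weight m k\<close> by which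
  one differentiation can enlarge a coefficient at level \<open>m\<close> (from the chain rule
  \<open>2^m\<close> and from the exponents \<open>a, b, e\<close>, which stay \<open>\<le> m + 2k\<close>).\<close>

definition growth :: "nat \<Rightarrow> real" where "growth m = 2 powr (real m * real m / 2)"

definition weight :: "nat \<Rightarrow> nat \<Rightarrow> real" where "weight m k = 2^m * (2 + 2 * real k)"

text \<open>A bump term at level \<open>m\<close> obtained by \<open>k\<close> differentiations from \<open>F(m) \<kappa>(2^m|z|) z^m\<close>:
  its homogeneity degree \<open>a + b - e\<close> is \<open>m - k\<close> up to the \<open>j\<close> extra powers of \<open>|z|\<close>
  that pair with the derivatives of \<open>\<kappa>\<close>, and its coefficient is at most \<open>X\<close>.\<close>

definition admissible_bterm :: "nat \<Rightarrow> nat \<Rightarrow> real \<Rightarrow> bterm \<Rightarrow> bool" where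
  "admissible_bterm k m X t \<longleftrightarrow> (case t of (c, j, a, b, e) \<Rightarrow>
     (c \<noteq> 0 \<longrightarrow> a + b + k = m + e + j) \<and> j \<le> k \<and> e \<le> 2*k \<and> cmod c \<le> X)"

definition admissible :: "nat \<Rightarrow> (nat \<Rightarrow> bterm list) \<Rightarrow> bool" where
  "admissible k Lf \<longleftrightarrow> (\<exists>C N. C \<ge> 0 \<and> (\<forall>m. length (Lf m) \<le> N \<and>
     (\<forall>t \<in> set (Lf m). admissible_bterm k m (C * growth m * weight m k ^ k) t)))"

lemma nat_le_pow2: "real m \<le> 2^m"
proof -
  have "m < 2^m" by (rule less_exp)
  then have "real m \<le> real (2^m)" by linarith
  then show ?thesis by simp
qed

lemma norm_mult_bound:
  assumes "cmod c \<le> X" "0 \<le> \<mu>" "\<mu> \<le> W"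
  shows "cmod c * \<mu> * cmod v \<le> X * W * cmod v"
proof -
  have "0 \<le> X" using assms(1) norm_ge_zero order_trans by blast
  then show ?thesis by (intro mult_right_mono mult_mono assms) auto
qed

lemma diff_bterm_admissible:
  assumes t: "admissible_bterm k m X t" and mem: "t' \<in> set (diff_bterm v m t)"
  shows "admissible_bterm (Suc k) m (X * weight m k * cmod v) t'"
proof -
  obtain c j a b e where te: "t = (c, j, a, b, e)" by (cases t) auto
  obtain c' j' a' b' e' where te': "t' = (c', j', a', b', e')" by (cases t') auto
  have inv: "c \<noteq> 0 \<longrightarrow> a + b + k = m + e + j" and jk: "j \<le> k" and ek: "e \<le> 2*k"
    and cX: "cmod c \<le> X"
    using t unfolding te admissible_bterm_def by auto
  have W0: "0 \<le> weight m k" by (simp add: weight_def)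
  show ?thesis
  proof (cases "c = 0")
    case True
    have "0 \<le> X * weight m k * cmod v" using cX True W0 by simp
    then show ?thesis using mem True jk ek unfolding te te' admissible_bterm_def by auto
  next
    case False
    then have abk: "a + b + k = m + e + j" using inv by simp
    have Wge: "real m + 2 * real k \<le> weight m k"
    proof -
      have "2 * real k * 1 \<le> 2 * real k * 2^m" by (intro mult_left_mono) auto
      moreover have "weight m k = 2 * 2^m + 2 * real k * 2^m" by (simp add: weight_def algebra_simps)
      ultimately show ?thesis using nat_le_pow2[of m] by linarith
    qed
    have ha: "real a \<le> weight m k" and hb: "real b \<le> weight m k"
      and he: "real e / 2 \<le> weight m k" and h2: "2^m / 2 \<le> weight m k"
      using abk jk ek Wge by (linarith, linarith, linarith, simp add: weight_def)
    have n1: "cmod (c * v * 2^m / 2) \<le> X * weight m k * cmod v"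
      using norm_mult_bound[OF cX _ h2, of v] by (simp add: norm_mult norm_divide norm_power mult_ac)
    have n2: "cmod (c * cnj v * 2^m / 2) \<le> X * weight m k * cmod v"
      using norm_mult_bound[OF cX _ h2, of v] by (simp add: norm_mult norm_divide norm_power mult_ac)
    have n3: "cmod (c * of_nat a * v) \<le> X * weight m k * cmod v"
      using norm_mult_bound[OF cX _ ha, of v] by (simp add: norm_mult mult_ac)
    have n4: "cmod (c * of_nat b * cnj v) \<le> X * weight m k * cmod v"
      using norm_mult_bound[OF cX _ hb, of v] by (simp add: norm_mult mult_ac)
    have n5: "cmod (- c * of_nat e * v / 2) \<le> X * weight m k * cmod v"
      using norm_mult_bound[OF cX _ he, of v] by (simp add: norm_mult norm_divide mult_ac)
    have n6: "cmod (- c * of_nat e * cnj v / 2) \<le> X * weight m k * cmod v"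
      using norm_mult_bound[OF cX _ he, of v] by (simp add: norm_mult norm_divide mult_ac)
    have a1: "c * of_nat a * v \<noteq> 0 \<Longrightarrow> a - 1 + b + Suc k = m + e + j" using abk by (cases a) auto
    have b1: "c * of_nat b * cnj v \<noteq> 0 \<Longrightarrow> a + (b - 1) + Suc k = m + e + j" using abk by (cases b) auto
    from mem[unfolded te te'] show ?thesis
      unfolding te' admissible_bterm_def diff_bterm.simps list.set insert_iff empty_iff prod.inject
      using abk jk ek n1 n2 n3 n4 n5 n6 a1 b1 by (elim disjE conjE; simp only:; auto)
  qed
qed

lemma length_diff_bterms: "length (concat (map (diff_bterm v m) L)) = 6 * length L"
proof (induction L)
  case (Cons t L) then show ?case by (cases t) auto
qed simp

lemma admissible_diff_family:
  assumes "admissible k Lf"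
  shows "admissible (Suc k) (diff_family v Lf)"
proof -
  from assms obtain C N where C: "C \<ge> 0" and len: "\<And>m. length (Lf m) \<le> N"
    and terms: "\<And>m t. t \<in> set (Lf m) \<Longrightarrow> admissible_bterm k m (C * growth m * weight m k ^ k) t"
    unfolding admissible_def by blast
  have "admissible_bterm (Suc k) m ((C * cmod v) * growth m * weight m (Suc k) ^ Suc k) t'"
    if t': "t' \<in> set (diff_family v Lf m)" for m t'
  proof -
    obtain t where t: "t \<in> set (Lf m)" "t' \<in> set (diff_bterm v m t)"
      using t' unfolding diff_family_def set_concat set_map by blast
    have "(C * growth m * weight m k ^ k) * weight m k * cmod v
          = (C * cmod v) * growth m * weight m k ^ Suc k"
      by (simp add: algebra_simps)
    also have "\<dots> \<le> (C * cmod v) * growth m * weight m (Suc k) ^ Suc k"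
      using C by (intro mult_left_mono power_mono) (auto simp: weight_def growth_def)
    finally show ?thesis
      using diff_bterm_admissible[OF terms[OF t(1)] t(2)]
      by (auto simp: admissible_bterm_def split: prod.splits)
  qed
  moreover have "length (diff_family v Lf m) \<le> 6 * N" for m
    using len[of m] by (simp add: diff_family_def length_diff_bterms)
  ultimately show ?thesis
    unfolding admissible_def using C by (intro exI[of _ "C * cmod v"] exI[of _ "6 * N"]) auto
qed

text \<open>Gaussian decay beats any exponential: this is where \<open>F(m) = 2^(m^2/2)\<close> is used.\<close>

lemma gaussian_decay_eventually:
  fixes K A B \<epsilon> :: real
  assumes "\<epsilon> > 0"
  shows "\<exists>N. \<forall>m\<ge>N. K * 2 powr (- (real m * real m) / 2 + A * real m + B) \<le> \<epsilon>"
proof -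
  have "((\<lambda>m::nat. K * 2 powr (- (real m * real m) / 2 + A * real m + B)) \<longlongrightarrow> 0) sequentially"
    by real_asymp
  from order_tendstoD(2)[OF this assms]
  show ?thesis unfolding eventually_sequentially by (meson less_imp_le)
qed

lemma level_scale_bounds:
  fixes x :: real
  assumes x: "x > 0" "1/2 < 2^m * x" "2^m * x < 4"
  shows "x^m \<le> 2 powr ((2 - real m) * real m)" "(1/x)^n \<le> 2 powr ((real m + 1) * real n)"
proof -
  have "x \<le> 4 / 2^m" using x by (simp add: field_simps)
  also have "4 / 2^m = 2 powr (2 - real m)" by (simp add: powr_realpow[symmetric] powr_diff)
  finally have "x^m \<le> (2 powr (2 - real m))^m" using x by (intro power_mono) auto
  then show "x^m \<le> 2 powr ((2 - real m) * real m)" by (simp add: powr_power mult.commute)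
  have "1/x \<le> 2 * 2^m" using x by (simp add: field_simps)
  also have "\<dots> = 2 powr (real m + 1)" by (simp add: powr_realpow[symmetric] powr_add)
  finally have "(1/x)^n \<le> (2 powr (real m + 1))^n" using x by (intro power_mono) auto
  then show "(1/x)^n \<le> 2 powr ((real m + 1) * real n)" by (simp add: powr_power mult.commute)
qed

text \<open>The coefficient bound of an admissible term at level \<open>m\<close>, divided by \<open>|z|^(k+J)\<close>,
  is a Gaussian in \<open>m\<close> times \<open>2^-(m+1)\<close> (which later makes the levels summable).\<close>

lemma level_coefficient_bound:
  fixes x :: real
  assumes x: "x > 0" "1/2 < 2^m * x" "2^m * x < 4"
  shows "growth m * weight m k ^ k * x^m / x^k / x^J \<le>
         (2 + 2 * real k)^k * 2 powr (- (real m * real m) / 2 + (2 * real k + real J + 3) * real m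
           + (real k + real J + 1)) * (1/2)^(m+1)"
proof -
  note bounds = level_scale_bounds[OF x]
  have W: "weight m k ^ k = (2 + 2 * real k)^k * 2 powr (real m * real k)"
  proof -
    have "((2::real)^m) ^ k = 2 powr (real m * real k)"
      using powr_realpow[of 2 "m * k"] by (simp add: power_mult)
    then show ?thesis by (simp add: weight_def power_mult_distrib)
  qed
  have half: "(1/2::real)^(m+1) = 2 powr (- (real m + 1))"
    using powr_minus[of 2 "real (m+1)"] powr_realpow[of 2 "m+1"]
    by (simp add: power_one_over inverse_eq_divide add.commute)
  have "growth m * weight m k ^ k * x^m / x^k / x^J = growth m * weight m k ^ k * x^m * (1/x)^(k+J)"
    using x by (simp add: field_simps power_add)
  also have "\<dots> \<le> growth m * weight m k ^ k * 2 powr ((2 - real m) * real m)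
                    * 2 powr ((real m + 1) * real (k + J))"
    using bounds(1) bounds(2)[of "k + J"] x by (intro mult_mono) (auto simp: growth_def weight_def)
  also have "\<dots> = (2 + 2 * real k)^k * 2 powr (real m * real m / 2 + real m * real k
                    + (2 - real m) * real m + (real m + 1) * (real k + real J))"
    by (simp add: growth_def W powr_add)
  also have "real m * real m / 2 + real m * real k + (2 - real m) * real m
               + (real m + 1) * (real k + real J)
      = (- (real m * real m) / 2 + (2 * real k + real J + 3) * real m + (real k + real J + 1))
        + (- (real m + 1))"
    by (simp add: algebra_simps)
  also have "2 powr ((- (real m * real m) / 2 + (2 * real k + real J + 3) * real m
                + (real k + real J + 1)) + (- (real m + 1)))
      = 2 powr (- (real m * real m) / 2 + (2 * real k + real J + 3) * real m
                + (real k + real J + 1)) * (1/2)^(m+1)"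
    by (simp only: powr_add half)
  finally show ?thesis by (simp only: mult.assoc)
qed

lemma norm_sum_list_bound:
  fixes f :: "'a \<Rightarrow> 'b::real_normed_vector"
  assumes "\<And>t. t \<in> set L \<Longrightarrow> norm (f t) \<le> Y"
  shows "norm (sum_list (map f L)) \<le> real (length L) * Y"
  using assms
proof (induction L)
  case (Cons t L)
  have "norm (sum_list (map f (t # L))) \<le> norm (f t) + norm (sum_list (map f L))"
    by (simp add: norm_triangle_ineq)
  also have "\<dots> \<le> Y + real (length L) * Y" using Cons by (intro add_mono) auto
  finally show ?case by (simp add: algebra_simps)
qed simp

lemma geom_half_sum: "(\<Sum>m<M. (1/2::real)^(m+1)) = 1 - (1/2)^M"
  by (induction M) (auto simp: algebra_simps)

context cutoff begin

lemma eval_bterm_bound: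
  assumes t: "admissible_bterm k m X t" and r: "0 < cmod z" "cmod z \<le> 1"
    and B: "\<forall>j\<le>k. \<forall>x. \<bar>bump s j x\<bar> \<le> B"
  shows "cmod (eval_bterm s m t z) \<le> X * B * (cmod z ^ m / cmod z ^ k)"
proof -
  obtain c j a b e where te: "t = (c, j, a, b, e)" by (cases t) auto
  have inv: "c \<noteq> 0 \<longrightarrow> a + b + k = m + e + j" and jk: "j \<le> k" and cX: "cmod c \<le> X"
    using t unfolding te admissible_bterm_def by auto
  let ?r = "cmod z"
  have Bj: "\<bar>bump s j x\<bar> \<le> B" for x using B jk by blast
  have X0: "0 \<le> X" using cX norm_ge_zero order_trans by blast
  have B0: "0 \<le> B" using Bj[of 0] by linarith
  have nrm: "cmod (eval_bterm s m t z) = cmod c * \<bar>bump s j (2^m * ?r)\<bar> * (?r^a * ?r^b / ?r^e)"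
    by (simp add: te norm_mult norm_divide norm_power)
  show ?thesis
  proof (cases "c = 0")
    case True
    then show ?thesis using X0 B0 nrm by simp
  next
    case False
    then have abk: "a + b + k = m + e + j" using inv by simp
    have pw: "?r^a * ?r^b / ?r^e \<le> ?r^m / ?r^k"
    proof -
      have "?r^a * ?r^b * ?r^k = ?r^(m+e+j)" by (simp add: abk[symmetric] power_add)
      also have "\<dots> \<le> ?r^(m+e)" using r by (intro power_decreasing) auto
      also have "\<dots> = ?r^m * ?r^e" by (simp add: power_add)
      finally have h: "?r^a * ?r^b * ?r^k \<le> ?r^m * ?r^e" .
      have pk: "0 < ?r^k" "0 < ?r^e" using r by auto
      show ?thesis using h pk by (simp add: divide_le_eq le_divide_eq field_simps)
    qed
    have "cmod c * \<bar>bump s j (2^m * ?r)\<bar> * (?r^a * ?r^b / ?r^e) \<le> X * B * (?r^m / ?r^k)"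
      using cX Bj pw X0 B0 by (intro mult_mono) auto
    then show ?thesis using nrm by simp
  qed
qed

lemma level_sum_flat_bound:
  assumes C: "C \<ge> 0" and len: "length L \<le> N"
    and terms: "\<forall>t\<in>set L. admissible_bterm k m (C * growth m * weight m k ^ k) t"
    and B0: "B \<ge> 0" and B: "\<forall>j\<le>k. \<forall>x. \<bar>bump s j x\<bar> \<le> B"
    and z0: "0 < cmod z" and z1: "cmod z \<le> 1" and lo: "1/2 < 2^m * cmod z"
  shows "cmod (level_sum s m L z) / cmod z ^ J \<le> real N * C * B * (2 + 2 * real k)^k
           * 2 powr (- (real m * real m) / 2 + (2 * real k + real J + 3) * real m
               + (real k + real J + 1)) * (1/2)^(m+1)"
proof (cases "2^m * cmod z < 4")
  case False
  then have "level_sum s m L z = 0" by (simp add: level_sum_def eval_bterm_above)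
  then show ?thesis using C B0 by simp
next
  case hi: True
  let ?X = "C * growth m * weight m k ^ k * B * (cmod z ^ m / cmod z ^ k)"
  have "cmod (level_sum s m L z) \<le> real (length L) * ?X"
    unfolding level_sum_def
    by (rule norm_sum_list_bound) (use eval_bterm_bound terms z0 z1 B in blast)
  also have "\<dots> \<le> real N * ?X"
    using len C B0 by (intro mult_right_mono) (auto simp: growth_def weight_def)
  finally have "cmod (level_sum s m L z) / cmod z ^ J \<le>
      real N * C * B * (growth m * weight m k ^ k * cmod z ^ m / cmod z ^ k / cmod z ^ J)"
    using z0 by (simp add: divide_right_mono field_simps)
  also have "\<dots> \<le> real N * C * B * ((2 + 2 * real k)^k
           * 2 powr (- (real m * real m) / 2 + (2 * real k + real J + 3) * real m
               + (real k + real J + 1)) * (1/2)^(m+1))"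
    using level_coefficient_bound[OF z0 lo hi, of k J] C B0 by (intro mult_left_mono) auto
  finally show ?thesis by (simp add: mult.assoc)
qed

lemma active_level_large:
  fixes x :: real
  assumes "0 < x" "x < (1/2)^(N0+1)" "1/2 < 2^m * x"
  shows "N0 \<le> m"
proof (rule ccontr)
  assume "\<not> N0 \<le> m"
  then have "(2::real)^(m+1) \<le> 2^N0" by (intro power_increasing) auto
  then have "2^(m+1) * x \<le> 2^N0 * x" by (rule mult_right_mono) (use assms in simp)
  moreover have "2^N0 * x < 2^N0 * (1/2)^(N0+1)" using assms(2) by simp
  moreover have "(2::real)^N0 * (1/2)^(N0+1) = 1/2" by (simp add: power_one_over field_simps)
  ultimately have "2^(m+1) * x < 1/2" by linarith
  then show False using assms(3) by simp
qed

lemma dyadic_sum_geometric_bound: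
  assumes z0: "0 < cmod z" and \<epsilon>: "\<epsilon> \<ge> 0"
    and level: "\<And>m. cmod (level_sum s m (Lf m) z) / cmod z ^ J \<le> \<epsilon> * (1/2)^(m+1)"
  shows "cmod (dyadic_sum s Lf z) / cmod z ^ J \<le> \<epsilon>"
proof -
  have "cmod (dyadic_sum s Lf z) / cmod z ^ J
        \<le> (\<Sum>m<top_level z. cmod (level_sum s m (Lf m) z) / cmod z ^ J)"
    using z0 by (simp add: dyadic_sum_def norm_sum sum_divide_distrib[symmetric] divide_right_mono)
  also have "\<dots> \<le> (\<Sum>m<top_level z. \<epsilon> * (1/2)^(m+1))" by (intro sum_mono level)
  also have "\<dots> = \<epsilon> * (1 - (1/2)^(top_level z))"
    by (simp only: sum_distrib_left[symmetric] geom_half_sum)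
  also have "\<dots> \<le> \<epsilon>" using \<epsilon> by (simp add: algebra_simps)
  finally show ?thesis .
qed

text \<open>Admissible dyadic sums vanish to infinite order at the origin: for \<open>|z| < 2^-(N0+1)\<close>
  only levels \<open>m \<ge> N0\<close> are active, where the Gaussian factor is already small.\<close>

lemma dyadic_sum_flat:
  assumes "admissible k Lf"
  shows "((\<lambda>z. cmod (dyadic_sum s Lf z) / cmod z ^ J) \<longlongrightarrow> 0) (at 0)"
proof -
  from assms obtain C N where C: "C \<ge> 0" and len: "\<And>m. length (Lf m) \<le> N"
    and terms: "\<And>m. \<forall>t \<in> set (Lf m). admissible_bterm k m (C * growth m * weight m k ^ k) t"
    unfolding admissible_def by blast
  obtain B where B0: "B \<ge> 0" and B: "\<forall>j\<le>k. \<forall>x. \<bar>bump s j x\<bar> \<le> B"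
    using bump_bounded_upto by blast
  define K where "K = real N * C * B * (2 + 2 * real k)^k"
  show ?thesis unfolding LIM_eq
  proof (intro allI impI)
    fix r :: real assume r: "r > 0"
    obtain N0 where N0: "\<forall>m\<ge>N0. K * 2 powr (- (real m * real m) / 2
        + (2 * real k + real J + 3) * real m + (real k + real J + 1)) \<le> r/2"
      using gaussian_decay_eventually[of "r/2" K "2 * real k + real J + 3" "real k + real J + 1"] r
      by auto
    define \<delta> where "\<delta> = (1/2::real)^(N0+1)"
    have \<delta>1: "\<delta> \<le> 1" unfolding \<delta>_def by (rule power_le_one) auto
    have small: "cmod (dyadic_sum s Lf z) / cmod z ^ J \<le> r/2" if z0: "0 < cmod z" and zd: "cmod z < \<delta>" for z
    proof (rule dyadic_sum_geometric_bound[OF z0])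
      fix m
      show "cmod (level_sum s m (Lf m) z) / cmod z ^ J \<le> r/2 * (1/2)^(m+1)"
      proof (cases "2^m * cmod z \<le> 1/2")
        case True
        then have "level_sum s m (Lf m) z = 0" by (simp add: level_sum_def eval_bterm_below)
        then show ?thesis using r by simp
      next
        case False
        have "cmod (level_sum s m (Lf m) z) / cmod z ^ J \<le> K * 2 powr (- (real m * real m) / 2
            + (2 * real k + real J + 3) * real m + (real k + real J + 1)) * (1/2)^(m+1)"
          using level_sum_flat_bound[OF C len terms B0 B z0, of m J] False zd \<delta>1
          by (simp add: K_def)
        also have "\<dots> \<le> r/2 * (1/2)^(m+1)"
          using N0 active_level_large[OF z0 zd[unfolded \<delta>_def], of m] False
          by (intro mult_right_mono) auto
        finally show ?thesis .
      qed
    qed (use r in simp)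
    show "\<exists>\<delta>>0. \<forall>z. z \<noteq> 0 \<and> norm (z - 0) < \<delta>
            \<longrightarrow> norm (cmod (dyadic_sum s Lf z) / cmod z ^ J - 0) < r"
    proof (intro exI[of _ \<delta>] conjI allI impI)
      show "\<delta> > 0" by (simp add: \<delta>_def)
      fix z :: complex assume "z \<noteq> 0 \<and> norm (z - 0) < \<delta>"
      then have "cmod (dyadic_sum s Lf z) / cmod z ^ J \<le> r/2" using small by simp
      then have "cmod (dyadic_sum s Lf z) / cmod z ^ J < r" using r by linarith
      then show "norm (cmod (dyadic_sum s Lf z) / cmod z ^ J - 0) < r" by simp
    qed
  qed
qed

end

lemma Ck_on_Pair:
  "Ck_on n S f \<Longrightarrow> Ck_on n S g \<Longrightarrow> Ck_on n S (\<lambda>x. (f x, g x))"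
proof (induction n arbitrary: f g)
  case 0
  then show ?case by (auto intro: continuous_on_Pair)
next
  case (Suc n)
  from Suc.prems(1) obtain f' where f': "\<forall>x\<in>S. (f has_derivative f' x) (at x)"
    "\<forall>v. Ck_on n S (\<lambda>x. f' x v)" by auto
  from Suc.prems(2) obtain g' where g': "\<forall>x\<in>S. (g has_derivative g' x) (at x)"
    "\<forall>v. Ck_on n S (\<lambda>x. g' x v)" by auto
  show ?case
    using f' g' Suc.IH
    by (auto intro!: exI[of _ "\<lambda>x v. (f' x v, g' x v)"] has_derivative_Pair)
qed

lemma Ck_on_cong_open:
  assumes "open S" "\<And>x. x \<in> S \<Longrightarrow> f x = g x" "Ck_on n S f"
  shows "Ck_on n S g"
  using assms(2,3)
proof (induction n arbitrary: f g)
  case 0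
  then show ?case using continuous_on_cong by (metis Ck_on.simps(1))
next
  case (Suc n)
  from Suc.prems(2) obtain f' where f': "\<forall>x\<in>S. (f has_derivative f' x) (at x)"
    "\<forall>v. Ck_on n S (\<lambda>x. f' x v)" by auto
  have "(g has_derivative f' x) (at x)" if x: "x \<in> S" for x
    using has_derivative_transform_within_open[of f "f' x" x UNIV S g] f'(1) x Suc.prems(1) assms(1)
    by auto
  then show ?case using f'(2) by auto
qed

context cutoff begin

lemma dyadic_sum_deriv_origin:
  assumes "admissible k Lf"
  shows "(dyadic_sum s Lf has_derivative (\<lambda>v. 0)) (at 0)"
proof -
  have "((\<lambda>h. cmod (dyadic_sum s Lf h) / cmod h ^ 1) \<longlongrightarrow> 0) (at 0)"
    by (rule dyadic_sum_flat[OF assms])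
  then show ?thesis unfolding has_derivative_at by (simp add: dyadic_sum_def bounded_linear_zero)
qed

text \<open>Admissible dyadic sums are \<open>C^n\<close> for every \<open>n\<close>: at \<open>z \<noteq> 0\<close> the derivative in direction
  \<open>v\<close> is the dyadic sum of \<open>diff_family v Lf\<close>, at \<open>0\<close> it is \<open>0\<close>, which is also the value of
  that dyadic sum at \<open>0\<close>; and \<open>diff_family v Lf\<close> is again admissible.\<close>

lemma dyadic_sum_Ck:
  assumes "admissible k Lf"
  shows "Ck_on n S (dyadic_sum s Lf)"
  using assms
proof (induction n arbitrary: k Lf)
  case 0
  have "isCont (dyadic_sum s Lf) z" for z
  proof (cases "z = 0")
    case True then show ?thesis
      using has_derivative_continuous[OF dyadic_sum_deriv_origin[OF 0]] by simp
  next
    case False then show ?thesis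
      using has_derivative_continuous[OF dyadic_sum_deriv[OF False]] by simp
  qed
  then show ?case by (simp add: continuous_at_imp_continuous_on)
next
  case (Suc n)
  have "(dyadic_sum s Lf has_derivative (\<lambda>v. dyadic_sum s (diff_family v Lf) x)) (at x)" for x
  proof (cases "x = 0")
    case True then show ?thesis
      using dyadic_sum_deriv_origin[OF Suc.prems] by (simp add: dyadic_sum_def)
  next
    case False then show ?thesis using dyadic_sum_deriv by blast
  qed
  moreover have "Ck_on n S (\<lambda>x. dyadic_sum s (diff_family v Lf) x)" for v
    using Suc.IH[OF admissible_diff_family[OF Suc.prems]] by simp
  ultimately show ?case by (auto intro!: exI[of _ "\<lambda>x v. dyadic_sum s (diff_family v Lf) x"])
qed

end

lemma radius_Suc: "2 powr (1 - real (Suc n)) = 1 / (2::real)^n"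
proof -
  have "2 powr (1 - real (Suc n)) = 2 powr (- real n)" by simp
  also have "\<dots> = inverse (2 powr real n)" by (rule powr_minus)
  also have "\<dots> = 1 / 2^n" by (simp add: powr_realpow inverse_eq_divide)
  finally show ?thesis .
qed

lemma radius_eq: "n \<ge> 1 \<Longrightarrow> 2 powr (1 - real n) = 2 / (2::real)^n"
proof -
  assume "n \<ge> 1"
  then obtain k where k: "n = Suc k" by (cases n) auto
  have "2 powr (1 - real n) = 1 / 2^k" using radius_Suc[of k] k by simp
  also have "\<dots> = 2 / 2^n" using k by simp
  finally show ?thesis .
qed

lemma annulus_idx_scaled:
  assumes z: "0 < cmod z" "cmod z < 1"
  defines "N \<equiv> annulus_idx (\<lambda>n. 2 powr (1 - real n)) z"
  shows "1 \<le> N \<and> 1 \<le> 2^N * cmod z \<and> 2^N * cmod z < 2"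
proof -
  let ?P = "\<lambda>n. 1 \<le> n \<and> 2 powr (1 - real (Suc n)) \<le> cmod z"
  have NL: "N = (LEAST n. ?P n)" by (simp add: N_def annulus_idx_def)
  obtain n0 where n0: "1 / cmod z < 2^n0" using real_arch_pow[of 2 "1 / cmod z"] by auto
  have "?P (max 1 n0)"
  proof -
    have "(2::real)^n0 \<le> 2^(max 1 n0)" by (intro power_increasing) auto
    then have "1 / cmod z < 2^(max 1 n0)" using n0 by linarith
    then have "1 / 2^(max 1 n0) \<le> cmod z" using z by (simp add: field_simps)
    then show ?thesis by (subst radius_Suc) simp
  qed
  then have PN: "?P N" unfolding NL by (rule LeastI)
  have up: "cmod z < 2 / 2^N"
  proof (cases "N = 1")
    case True then show ?thesis using z by simp
  next
    case False
    then have N2: "N - 1 < N" "1 \<le> N - 1" using PN by auto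
    have "\<not> ?P (N - 1)" unfolding NL by (rule not_less_Least) (use N2 NL in auto)
    then have "cmod z < 2 powr (1 - real N)" using N2 by simp
    also have "\<dots> = 2 / 2^N" using N2 by (intro radius_eq) auto
    finally show ?thesis .
  qed
  have "1 / 2^N \<le> cmod z" using PN radius_Suc[of N] by simp
  then have "1 \<le> 2^N * cmod z" by (simp add: field_simps)
  moreover have "2^N * cmod z < 2" using up by (simp add: field_simps)
  ultimately show ?thesis using PN by simp
qed

definition component_family :: "bool \<Rightarrow> nat \<Rightarrow> bterm list" where
  "component_family par m =
     (if even m = par then [(complex_of_real (growth m), 0, m, 0, 0)] else [])"

definition model_map :: "(real \<Rightarrow> real) \<Rightarrow> complex \<Rightarrow> complex \<times> complex" where
  "model_map s z = (dyadic_sum s (component_family True) z, dyadic_sum s (component_family False) z)"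

lemma admissible_component_family: "admissible 0 (component_family par)"
  unfolding admissible_def component_family_def admissible_bterm_def
  by (intro exI[of _ 1] exI[of _ 1]) (auto simp: growth_def)

lemma growth_eq: "2 powr ((real n)^2 / 2) = growth n"
  by (simp add: growth_def power2_eq_square)

context cutoff begin

lemma dyadic_sum_three_levels:
  assumes n: "1 \<le> n" "1 \<le> 2^n * cmod z" "2^n * cmod z < 2"
  shows "dyadic_sum s Lf z = level_sum s (n-1) (Lf (n-1)) z + level_sum s n (Lf n) z
           + level_sum s (Suc n) (Lf (Suc n)) z"
proof -
  have z: "z \<noteq> 0" using n by auto
  have big: "4 \<le> 2^m * cmod z" if "n + 2 \<le> m" for m
  proof -
    have "(2::real)^(n+2) \<le> 2^m" using that by (intro power_increasing) auto
    then have "2^(n+2) * cmod z \<le> 2^m * cmod z" by (simp add: mult_right_mono)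
    moreover have "2^(n+2) * cmod z = 4 * (2^n * cmod z)" by (simp add: power_add)
    ultimately show ?thesis using n by linarith
  qed
  have e: "dyadic_sum s Lf z = (\<Sum>m<n+2. level_sum s m (Lf m) z)"
    by (rule dyadic_sum_truncate[OF z big]) simp
  have low: "level_sum s m (Lf m) z = 0" if "m < n - 1" for m
  proof -
    have "(2::real)^m \<le> 2^(n-2)" using that by (intro power_increasing) auto
    then have "2^m * cmod z \<le> 2^(n-2) * cmod z" by (simp add: mult_right_mono)
    moreover have "2^n * cmod z = 4 * (2^(n-2) * cmod z)"
    proof -
      have "n = (n - 2) + 2" using that by simp
      then have "(2::real)^n = 2^(n-2) * 2^2" by (metis power_add)
      then show ?thesis by simp
    qed
    ultimately have "2^m * cmod z \<le> 1/2" using n by linarith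
    then show ?thesis by (simp add: level_sum_def eval_bterm_below)
  qed
  obtain k where k: "n = Suc k" using n by (cases n) auto
  have "(\<Sum>m<n+2. level_sum s m (Lf m) z) = (\<Sum>m<k. level_sum s m (Lf m) z)
        + level_sum s k (Lf k) z + level_sum s (Suc k) (Lf (Suc k)) z + level_sum s (Suc (Suc k)) (Lf (Suc (Suc k))) z"
    unfolding k by simp
  moreover have "(\<Sum>m<k. level_sum s m (Lf m) z) = 0" using low k by simp
  ultimately show ?thesis using e k by simp
qed

lemma level_sum_component: "level_sum s m (component_family par m) z =
   (if even m = par then complex_of_real (growth m) * complex_of_real (bump s 0 (2^m * cmod z)) * z^m
    else 0)"
  by (simp add: level_sum_def component_family_def)

text \<open>On \<open>A_N\<close>, with
  \<open>y = 2^N |z|\<close>, the cutoff is \<open>\<chi>_N = s (y - 1)\<close> and the three active levels produce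
  exactly the formulas of the General Construction.\<close>

lemma gc_u_eq_model_nonzero:
  assumes z: "0 < cmod z" "cmod z < 1"
  shows "gc_u s (\<lambda>n. 2 powr (1 - real n)) (\<lambda>n. n) (\<lambda>n. 2 powr ((real n)^2/2)) z = model_map s z"
proof -
  define N where "N = annulus_idx (\<lambda>n. 2 powr (1 - real n)) z"
  have NF: "1 \<le> N" "1 \<le> 2^N * cmod z" "2^N * cmod z < 2"
    using annulus_idx_scaled[OF z] unfolding N_def by auto
  define y where "y = 2^N * cmod z"
  have y: "1 \<le> y" "y < 2" using NF by (auto simp: y_def)
  have chi: "(cmod z - 2 powr (1 - real (Suc N))) / (2 powr (1 - real N) - 2 powr (1 - real (Suc N)))
             = y - 1"
    unfolding radius_Suc radius_eq[OF NF(1)] y_def by (simp add: field_simps)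
  have e1: "2^(N-1) * cmod z = y/2"
  proof -
    have "(2::real)^N = 2^(N-1) * 2" using NF(1) by (cases N) auto
    then show ?thesis by (simp add: y_def)
  qed
  have e2: "2^(Suc N) * cmod z = 2 * y" by (simp add: y_def)
  note kv = bump_values[OF y]
  have znz: "z \<noteq> 0" using z by auto
  have U: "dyadic_sum s (component_family par) z =
      (if even (N-1) = par
       then complex_of_real (growth (N-1)) * complex_of_real (s (y - 1)) * z^(N-1) else 0)
    + (if even N = par then complex_of_real (growth N) * z^N else 0)
    + (if even (Suc N) = par
       then complex_of_real (growth (Suc N)) * complex_of_real (1 - s (y - 1)) * z^(Suc N) else 0)"
    for par
    unfolding dyadic_sum_three_levels[OF NF] level_sum_component e1 e2 using kv
    by (simp add: y_def[symmetric])
  have odd1: "even (N - 1) \<longleftrightarrow> odd N" using NF(1) by (cases N) auto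
  show ?thesis
    unfolding gc_u_def Let_def N_def[symmetric] growth_eq chi model_map_def U
    using znz odd1 by (auto simp: algebra_simps)
qed

lemma gc_u_eq_model:
  assumes "z \<in> ball 0 1"
  shows "gc_u s (\<lambda>n. 2 powr (1 - real n)) (\<lambda>n. n) (\<lambda>n. 2 powr ((real n)^2/2)) z = model_map s z"
  using assms gc_u_eq_model_nonzero[of z] by (cases "z = 0") (auto simp: gc_u_def model_map_def dyadic_sum_def)

lemma model_map_smooth: "smooth_on S (model_map s)"
  unfolding smooth_on_def model_map_def
  by (intro allI Ck_on_Pair dyadic_sum_Ck[OF admissible_component_family])

lemma model_map_flat: "((\<lambda>z. norm (model_map s z) / cmod z ^ k) \<longlongrightarrow> 0) (at 0)"
proof (rule tendsto_sandwich[where f = "\<lambda>_. 0"])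
  let ?U = "\<lambda>par z. cmod (dyadic_sum s (component_family par) z) / cmod z ^ k"
  show "\<forall>\<^sub>F z in at 0. norm (model_map s z) / cmod z ^ k \<le> ?U True z + ?U False z"
    by (intro always_eventually allI)
       (simp add: model_map_def add_divide_distrib[symmetric] divide_right_mono norm_Pair_le)
  show "((\<lambda>z. ?U True z + ?U False z) \<longlongrightarrow> 0) (at 0)"
    using tendsto_add[OF dyadic_sum_flat[OF admissible_component_family]
        dyadic_sum_flat[OF admissible_component_family]] by simp
qed auto

end

lemma wirtinger_of_derivative:
  assumes "\<And>v. D v = v * A + cnj v * B"
  shows "(D 1 - \<i> * D \<i>) / 2 = A" "(D 1 + \<i> * D \<i>) / 2 = B"
proof -
  have d1: "D 1 = A + B" using assms[of 1] by simp
  have di: "D \<i> = \<i> * A - \<i> * B" using assms[of \<i>] by simp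
  show "(D 1 - \<i> * D \<i>) / 2 = A" unfolding d1 di by (simp add: algebra_simps complex_i_mult_minus)
  show "(D 1 + \<i> * D \<i>) / 2 = B" unfolding d1 di by (simp add: algebra_simps complex_i_mult_minus)
qed

text \<open>Comparison of neighbouring coefficients on \<open>A_n\<close>: the level \<open>n - 1\<close> and \<open>n + 1\<close>
  contributions to \<open>u_zbar\<close> are \<open>O(F(n) |z|^(n-1))\<close>, the size of \<open>u_z\<close> divided by \<open>n\<close>.\<close>

lemma growth_prev:
  assumes "1 \<le> n"
  shows "growth (n-1) * 2^(n-1) \<le> growth n"
proof -
  have "(2::real)^(n-1) = 2 powr (real (n-1))" by (simp add: powr_realpow)
  then have "growth (n-1) * 2^(n-1) = 2 powr (real (n-1) * real (n-1) / 2 + real (n-1))"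
    by (simp add: growth_def powr_add)
  also have "\<dots> \<le> 2 powr (real n * real n / 2)"
  proof (rule powr_mono)
    have e: "real (n-1) = real n - 1" using assms by simp
    show "real (n-1) * real (n-1) / 2 + real (n-1) \<le> real n * real n / 2"
      unfolding e by (simp add: field_simps)
  qed simp
  finally show ?thesis by (simp add: growth_def)
qed

lemma growth_next:
  assumes q: "0 \<le> q" "2^n * q < 2"
  shows "growth (Suc n) * 2^(Suc n) * q^2 \<le> 16 * growth n"
proof -
  have "q \<le> 2 / 2^n" using q by (simp add: field_simps)
  also have "2 / 2^n = 2 powr (1 - real n)"
    by (simp add: powr_diff powr_realpow)
  finally have "q^2 \<le> (2 powr (1 - real n))^2" using q by (intro power_mono) auto
  also have "\<dots> = 2 powr (2 - 2 * real n)" by (simp add: powr_power algebra_simps)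
  finally have q2: "q^2 \<le> 2 powr (2 - 2 * real n)" .
  have p: "(2::real)^(Suc n) = 2 powr (real n + 1)"
    by (subst powr_realpow[symmetric]) (auto simp: add.commute)
  have "growth (Suc n) * 2^(Suc n) * q^2 \<le> growth (Suc n) * 2^(Suc n) * 2 powr (2 - 2 * real n)"
    using q2 by (intro mult_left_mono) (auto simp: growth_def)
  also have "\<dots> = 2 powr (real (Suc n) * real (Suc n) / 2 + (real n + 1) + (2 - 2 * real n))"
    unfolding growth_def p by (simp only: powr_add[symmetric])
  also have "\<dots> \<le> 2 powr (real n * real n / 2 + 4)"
    by (rule powr_mono) (auto simp: algebra_simps)
  also have "\<dots> = 16 * growth n" by (simp add: growth_def powr_add)
  finally show ?thesis .
qed

lemma neg_log2_bounds:
  assumes q: "0 < q" "q < 1" "1 \<le> 2^n * q"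
  shows "0 < - log 2 q" "- log 2 q \<le> real n"
proof -
  show "0 < - log 2 q" using q by simp
  have "1 / 2^n \<le> q" using q by (simp add: field_simps)
  then have "log 2 (1 / 2^n) \<le> log 2 q" using q by simp
  then show "- log 2 q \<le> real n" by (simp add: log_divide log_nat_power)
qed

context cutoff begin

text \<open>The derivative of the level-\<open>m\<close> term \<open>F(m) \<kappa>(2^m|z|) z^m\<close> in direction \<open>v\<close> is
  \<open>v * coeff_z m z + conj v * coeff_zbar m z\<close>.\<close>

definition coeff_z :: "nat \<Rightarrow> complex \<Rightarrow> complex" where
  "coeff_z m z = complex_of_real (growth m) *
     (2^m / 2 * complex_of_real (bump s 1 (2^m * cmod z)) * z^m * cnj z / complex_of_real (cmod z)
      + of_nat m * complex_of_real (bump s 0 (2^m * cmod z)) * z^(m-1))"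

definition coeff_zbar :: "nat \<Rightarrow> complex \<Rightarrow> complex" where
  "coeff_zbar m z = complex_of_real (growth m) *
     (2^m / 2 * complex_of_real (bump s 1 (2^m * cmod z)) * z^(Suc m) / complex_of_real (cmod z))"

lemma level_sum_diff_component: "level_sum s m (diff_family v (component_family par) m) z =
   (if even m = par then v * coeff_z m z + cnj v * coeff_zbar m z else 0)"
  by (simp add: level_sum_def component_family_def diff_family_def coeff_z_def coeff_zbar_def
      field_simps)

definition wirt_z :: "bool \<Rightarrow> complex \<Rightarrow> nat \<Rightarrow> complex" where
  "wirt_z par z N = (if even (N-1) = par then coeff_z (N-1) z else 0)
     + (if even N = par then coeff_z N z else 0) + (if even (Suc N) = par then coeff_z (Suc N) z else 0)"

definition wirt_zbar :: "bool \<Rightarrow> complex \<Rightarrow> nat \<Rightarrow> complex" where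
  "wirt_zbar par z N = (if even (N-1) = par then coeff_zbar (N-1) z else 0)
     + (if even N = par then coeff_zbar N z else 0)
     + (if even (Suc N) = par then coeff_zbar (Suc N) z else 0)"

lemma wirtinger_component:
  assumes z: "0 < cmod z" "cmod z < 1"
    and NF: "1 \<le> N" "1 \<le> 2^N * cmod z" "2^N * cmod z < 2"
    and hf: "\<And>w. w \<in> ball 0 1 \<Longrightarrow> f w = dyadic_sum s (component_family par) w"
  shows "dz f z = wirt_z par z N \<and> dzbar f z = wirt_zbar par z N"
proof -
  have znz: "z \<noteq> 0" using z by auto
  have "(f has_derivative (\<lambda>v. dyadic_sum s (diff_family v (component_family par)) z)) (at z)"
    by (rule has_derivative_transform_within_open[OF dyadic_sum_deriv[OF znz], of "ball 0 1"])
       (use z hf in auto)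
  then have fd: "frechet_derivative f (at z)
                 = (\<lambda>v. dyadic_sum s (diff_family v (component_family par)) z)"
    by (rule frechet_derivative_at[symmetric])
  have "frechet_derivative f (at z) v = v * wirt_z par z N + cnj v * wirt_zbar par z N" for v
    unfolding fd dyadic_sum_three_levels[OF NF] level_sum_diff_component wirt_z_def wirt_zbar_def
    by (simp add: algebra_simps)
  from wirtinger_of_derivative[OF this] show ?thesis unfolding dz_def dzbar_def by simp
qed

text \<open>On the middle level \<open>\<kappa> = 1\<close> and \<open>\<kappa>' = 0\<close>, so it contributes \<open>F(N) N z^(N-1)\<close> to
  \<open>u_z\<close> and nothing to \<open>u_zbar\<close>; the other levels contribute \<open>O(F(m) 2^m |z|^m)\<close> to \<open>u_zbar\<close>.\<close>

lemma coeff_middle_level: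
  assumes "1 \<le> 2^N * cmod z" "2^N * cmod z < 2"
  shows "coeff_z N z = complex_of_real (growth N) * of_nat N * z^(N-1)" "coeff_zbar N z = 0"
  using bump_values[OF assms] by (simp_all add: coeff_z_def coeff_zbar_def)

lemma coeff_zbar_bound:
  assumes "z \<noteq> 0" "\<forall>x. \<bar>bump s 1 x\<bar> \<le> B1"
  shows "cmod (coeff_zbar m z) \<le> growth m * 2^m / 2 * B1 * cmod z ^ m"
proof -
  have "cmod (coeff_zbar m z)
        = growth m * (2^m / 2 * \<bar>bump s 1 (2^m * cmod z)\<bar> * (cmod z ^ Suc m / cmod z))"
    by (simp add: coeff_zbar_def norm_mult norm_divide norm_power growth_def)
  also have "cmod z ^ Suc m / cmod z = cmod z ^ m" using assms(1) by simp
  also have "growth m * (2^m / 2 * \<bar>bump s 1 (2^m * cmod z)\<bar> * cmod z ^ m)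
             \<le> growth m * (2^m / 2 * B1 * cmod z ^ m)"
    using assms(2) by (intro mult_left_mono mult_right_mono) (auto simp: growth_def)
  finally show ?thesis by simp
qed

lemma model_wirtinger:
  assumes hu: "\<And>w. w \<in> ball 0 1 \<Longrightarrow> u w = model_map s w"
    and z: "0 < cmod z" "cmod z < 1" and NF: "1 \<le> N" "1 \<le> 2^N * cmod z" "2^N * cmod z < 2"
  shows "uz u z = (wirt_z True z N, wirt_z False z N)"
    "uzbar u z = (wirt_zbar True z N, wirt_zbar False z N)"
proof -
  have "\<And>w. w \<in> ball 0 1 \<Longrightarrow> fst (u w) = dyadic_sum s (component_family True) w"
    and "\<And>w. w \<in> ball 0 1 \<Longrightarrow> snd (u w) = dyadic_sum s (component_family False) w"
    using hu by (simp_all add: model_map_def)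
  from this[THEN wirtinger_component[OF z NF]]
  show "uz u z = (wirt_z True z N, wirt_z False z N)"
    "uzbar u z = (wirt_zbar True z N, wirt_zbar False z N)"
    by (simp_all add: uz_def uzbar_def)
qed

lemma wirt_z_lower:
  assumes NF: "1 \<le> N" "1 \<le> 2^N * cmod z" "2^N * cmod z < 2"
  shows "growth N * real N * cmod z^(N-1) \<le> norm (wirt_z True z N, wirt_z False z N)"
proof -
  have par: "even (N - 1) \<longleftrightarrow> odd N" using NF(1) by (cases N) auto
  have "wirt_z (even N) z N = complex_of_real (growth N) * of_nat N * z^(N-1)"
    using par by (simp add: wirt_z_def coeff_middle_level[OF NF(2,3)])
  then have "cmod (wirt_z (even N) z N) = growth N * real N * cmod z^(N-1)"
    by (simp add: norm_mult norm_power growth_def)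
  moreover have "cmod (wirt_z (even N) z N) \<le> norm (wirt_z True z N, wirt_z False z N)"
    by (cases "even N") (simp_all add: norm_fst_le norm_snd_le)
  ultimately show ?thesis by simp
qed

lemma wirt_zbar_upper:
  assumes NF: "1 \<le> N" "1 \<le> 2^N * cmod z" "2^N * cmod z < 2"
    and B1: "B1 \<ge> 0" "\<forall>x. \<bar>bump s 1 x\<bar> \<le> B1"
  shows "norm (wirt_zbar True z N, wirt_zbar False z N) \<le> 17 / 2 * B1 * (growth N * cmod z^(N-1))"
proof -
  let ?q = "cmod z"
  have znz: "z \<noteq> 0" using NF by auto
  have par: "even (N - 1) \<longleftrightarrow> odd N" using NF(1) by (cases N) auto
  have "norm (wirt_zbar True z N, wirt_zbar False z N)
        \<le> cmod (wirt_zbar True z N) + cmod (wirt_zbar False z N)"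
    by (rule norm_Pair_le)
  also have "\<dots> \<le> cmod (coeff_zbar (N-1) z) + cmod (coeff_zbar (Suc N) z)"
    using par coeff_middle_level(2)[OF NF(2,3)]
    by (cases "even N") (simp_all add: wirt_zbar_def norm_triangle_ineq)
  also have "cmod (coeff_zbar (N-1) z) \<le> B1 / 2 * (growth (N-1) * 2^(N-1) * ?q^(N-1))"
    using coeff_zbar_bound[OF znz B1(2), of "N - 1"] by (simp add: algebra_simps)
  also have "\<dots> \<le> B1 / 2 * (growth N * ?q^(N-1))"
    using growth_prev[OF NF(1)] B1(1) by (intro mult_left_mono mult_right_mono) auto
  also have "cmod (coeff_zbar (Suc N) z) \<le> B1 / 2 * (growth (Suc N) * 2^(Suc N) * ?q^2 * ?q^(N-1))"
    using coeff_zbar_bound[OF znz B1(2), of "Suc N"] NF(1)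
    by (cases N) (auto simp: algebra_simps power2_eq_square)
  also have "\<dots> \<le> B1 / 2 * (16 * growth N * ?q^(N-1))"
    using growth_next[of ?q N] NF(3) B1(1) by (intro mult_left_mono mult_right_mono) auto
  finally show ?thesis by (simp add: algebra_simps)
qed

lemma model_wirtinger_ratio:
  assumes hu: "\<And>w. w \<in> ball 0 1 \<Longrightarrow> u w = model_map s w"
    and B1: "B1 \<ge> 0" "\<forall>x. \<bar>bump s 1 x\<bar> \<le> B1"
    and z: "z \<in> ball 0 1 - {0}"
  shows "uz u z \<noteq> 0 \<and> norm (uzbar u z) / norm (uz u z) \<le> (9 * B1 + 1) / (- log 2 (cmod z))"
proof -
  define q where "q = cmod z"
  have q: "0 < q" "q < 1" using z by (auto simp: q_def)
  define N where "N = annulus_idx (\<lambda>n. 2 powr (1 - real n)) z"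
  have NF: "1 \<le> N" "1 \<le> 2^N * q" "2^N * q < 2"
    using annulus_idx_scaled[OF q[unfolded q_def]] unfolding N_def q_def by auto
  note W = model_wirtinger[OF hu q[unfolded q_def] NF[unfolded q_def]]
  have low: "growth N * real N * q^(N-1) \<le> norm (uz u z)"
    using wirt_z_lower[OF NF[unfolded q_def]] W(1) by (simp only: q_def)
  have up: "norm (uzbar u z) \<le> 17 / 2 * B1 * (growth N * q^(N-1))"
    using wirt_zbar_upper[OF NF[unfolded q_def] B1] W(2) by (simp only: q_def)
  have pos: "0 < growth N * real N * q^(N-1)" using NF(1) q by (simp add: growth_def)
  have "norm (uzbar u z) / norm (uz u z)
        \<le> (17 / 2 * B1) * (growth N * q^(N-1)) / (growth N * real N * q^(N-1))"
    using low up pos B1(1) q by (intro frac_le) (auto simp: growth_def)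
  also have "\<dots> = (17 / 2 * B1) / real N"
    using pos q NF(1) by (simp add: field_simps growth_def)
  also have "\<dots> \<le> (9 * B1 + 1) / real N"
    using NF(1) B1(1) by (intro divide_right_mono) auto
  also have "\<dots> \<le> (9 * B1 + 1) / (- log 2 q)"
    using neg_log2_bounds[OF q NF(2)] B1(1) NF(1)
    by (intro divide_left_mono) (auto intro: mult_pos_neg)
  finally show ?thesis using low pos by (auto simp: q_def)
qed

end

text \<open>Only smoothness of \<open>s\<close> and its flatness near \<open>0\<close> and \<open>1\<close> are
  needed: \<open>u\<close> is the model map on the unit disc, which is smooth and flat at \<open>0\<close>, and the
  ratio estimate holds with \<open>C1 = 9 B1 + 1\<close>, \<open>B1\<close> a bound for the derivative of the bump.\<close>

theorem mainTheorem4: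
  fixes s :: "real \<Rightarrow> real"
  assumes s_smooth: "smooth_on UNIV s"
    and s_zero: "\<forall>x\<in>{0..1/4}. s x = 0"
    and s_incr: "mono_on {1/4..3/4} s"
    and s_half: "s (1/2) = 1/2"
    and s_d1: "deriv s (1/2) = 2"
    and s_d2: "deriv (deriv s) (1/2) = 0"
    and s_one: "\<forall>x\<in>{3/4..1}. s x = 1"
  defines "u \<equiv> gc_u s (\<lambda>n. 2 powr (1 - real n)) (\<lambda>n. n) (\<lambda>n. 2 powr ((real n)^2 / 2))"
  shows "smooth_on (ball 0 1) u
     \<and> (\<forall>k::nat. ((\<lambda>z. norm (u z) / cmod z ^ k) \<longlongrightarrow> 0) (at 0))
     \<and> (\<forall>z\<in>ball 0 1 - {0}. uz u z \<noteq> 0)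
     \<and> (\<exists>C1>0. \<forall>z\<in>ball 0 1 - {0}.
          norm (uzbar u z) / norm (uz u z) \<le> C1 / (- log 2 (cmod z)))"
proof -
  interpret cutoff s using s_smooth s_zero s_one by unfold_locales
  have hu: "\<And>w. w \<in> ball 0 1 \<Longrightarrow> u w = model_map s w"
    unfolding u_def by (rule gc_u_eq_model)
  have smooth: "smooth_on (ball 0 1) u"
    using Ck_on_cong_open[OF open_ball, where f = "model_map s" and g = u] hu model_map_smooth
    unfolding smooth_on_def by metis
  have flat: "((\<lambda>z. norm (u z) / cmod z ^ k) \<longlongrightarrow> 0) (at 0)" for k
  proof (rule Lim_transform_within_open[OF model_map_flat[of k], of "ball 0 1"])
    show "\<And>z. z \<in> ball 0 1 \<Longrightarrow> z \<noteq> 0 \<Longrightarrow> norm (model_map s z) / cmod z ^ k = norm (u z) / cmod z ^ k"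
      using hu by simp
  qed auto
  obtain B1 where B1: "B1 \<ge> 0" "\<forall>x. \<bar>bump s 1 x\<bar> \<le> B1" using bump_bounded[of 1] by blast
  show ?thesis
    using smooth flat model_wirtinger_ratio[OF hu B1] B1(1)
    by (intro conjI allI ballI exI[of _ "9 * B1 + 1"]) auto
qed

end
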